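(* Let $G$ be a locally compact Abelian group and $(G, \mathbb{R}^d \times H_1, \mathcal{L})$ a cut and project scheme, with $H_1$ a locally compact Abelian group. For $h$ on $\mathbb R^d\times H_1$ write $\omega_h=\sum_{(x,x^\star)\in\mathcal L}h(x^\star)\delta_x$. (i) If $\phi \in \mathcal{S}(\mathbb{R}^d)$, $\psi \in C_c(H_1)$ and $h=\phi \otimes \psi$, then $\omega_h$ is a measure (i.e. $\sum_{x\in L\cap K}|h(x^\star)|<\infty$ for every compact $K\subseteq G$). (ii) For each compact $K \subseteq G$ and compact $W \subseteq H_1$ there exists a constant $C=C(K,W)$ such that for all $\phi \in \mathcal{S}(\mathbb{R}^d)$ and $\psi \in C_c(H_1)$ with $\operatorname{supp}(\psi) \subseteq W$, \[ \| \omega_{\phi \otimes \psi} \|_K \leq C \|\psi\|_\infty \big\| (1+|x|^{2d}) \phi(x) \big\|_\infty . \]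
   Context: Cut and project scheme $(G,H,\mathcal L)$: $\mathcal L\subseteq G\times H$ a lattice (discrete co-compact subgroup) with $\pi_H(\mathcal L)$ dense in $H$ and $\pi_G|_{\mathcal L}$ injective; $L=\pi_G(\mathcal L)$ and $\mathcal L=\{(x,x^\star):x\in L\}$. $\mathcal S(\mathbb R^d)$ is the Schwartz space; $(\phi\otimes\psi)(x,y)=\phi(x)\psi(y)$. For a measure $\mu$ and compact $K$, $\|\mu\|_K=\sup_{t\in G}|\mu|(t+K)$. *)

theory Defs
  imports "HOL-Analysis.Analysis" "HOL-Library.Product_Plus"
begin

definition lca_group :: "('a::{ab_group_add, t2_space}) itself \<Rightarrow> bool" where
  "lca_group _ \<longleftrightarrow>
     continuous_on UNIV (\<lambda>p::'a \<times> 'a. fst p + snd p) \<and>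
     continuous_on UNIV (uminus :: 'a \<Rightarrow> 'a) \<and>
     locally_compact_space (euclidean :: 'a topology)"

definition cut_and_project ::
  "('g::{ab_group_add, t2_space} \<times> 'h::{ab_group_add, t2_space}) set \<Rightarrow> bool" where
  "cut_and_project \<L> \<longleftrightarrow>
     0 \<in> \<L> \<and> (\<forall>a\<in>\<L>. \<forall>b\<in>\<L>. a + b \<in> \<L>) \<and> (\<forall>a\<in>\<L>. - a \<in> \<L>) \<and>
     (\<forall>z\<in>\<L>. \<exists>U. open U \<and> z \<in> U \<and> U \<inter> \<L> = {z}) \<and>
     (\<exists>C. compact C \<and> (\<forall>w. \<exists>l\<in>\<L>. \<exists>c\<in>C. w = l + c)) \<and>
     closure (snd ` \<L>) = UNIV \<and>
     inj_on fst \<L>"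

text \<open>Partial derivative in direction of the i-th coordinate axis, and iterated
  partial derivatives indexed by a list of coordinates (a multi-index).\<close>
definition pdiff :: "'n::finite \<Rightarrow> (real^'n \<Rightarrow> complex) \<Rightarrow> real^'n \<Rightarrow> complex" where
  "pdiff i f x = vector_derivative (\<lambda>t. f (x + t *\<^sub>R axis i 1)) (at 0)"

fun pdiffs :: "'n::finite list \<Rightarrow> (real^'n \<Rightarrow> complex) \<Rightarrow> real^'n \<Rightarrow> complex" where
  "pdiffs [] f = f"
| "pdiffs (i # is) f = pdiff i (pdiffs is f)"

definition schwartz :: "(real^'n::finite \<Rightarrow> complex) \<Rightarrow> bool" where
  "schwartz f \<longleftrightarrow>
     (\<forall>is. \<forall>x. pdiffs is f differentiable (at x)) \<and>
     (\<forall>is. \<forall>N::nat. bounded (range (\<lambda>x. (1 + norm x) ^ N * norm (pdiffs is f x))))"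

definition Cc :: "('h::topological_space \<Rightarrow> complex) \<Rightarrow> bool" where
  "Cc \<psi> \<longleftrightarrow> continuous_on UNIV \<psi> \<and> compact (closure {y. \<psi> y \<noteq> 0})"

definition supp :: "('h::topological_space \<Rightarrow> complex) \<Rightarrow> 'h set" where
  "supp \<psi> = closure {y. \<psi> y \<noteq> 0}"

text \<open>Total variation of omega_{phi (x) psi} on a set A:
  sum over (x,x*) in L with x in A of |phi(x*_1) psi(x*_2)|.\<close>
definition omega_var ::
  "('g \<times> (real^'n) \<times> 'h) set \<Rightarrow> (real^'n \<Rightarrow> complex) \<Rightarrow> ('h \<Rightarrow> complex) \<Rightarrow> 'g set \<Rightarrow> real" where
  "omega_var \<L> \<phi> \<psi> A =
     infsum (\<lambda>p. norm (\<phi> (fst (snd p)) * \<psi> (snd (snd p)))) {p\<in>\<L>. fst p \<in> A}"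

end

theory Submission
  imports Defs
begin

(* A lattice is uniformly discrete, so each translate of a fixed compact set contains
   at most m lattice points, with m independent of the translate.  Sort the points
   (x, u, h) of L with x in t + K and h in W by the integer cube k in Z^d containing u:
   each cube carries at most m of them, and on the cube at k the Schwartz decay gives
   |phi u| <= 6^d * sup ((1 + |y|^(2d)) |phi y|) * prod_i 1 / (1 + k_i^2).
   The product weight is summable over Z^d, which yields a constant depending only on
   K and W. *)

lemma continuous_diff_nhds_zero:
  fixes U :: "'a::{ab_group_add,topological_space} set"
  assumes "continuous_on UNIV (\<lambda>p::'a \<times> 'a. fst p - snd p)" and "open U" and "0 \<in> U"
  obtains V where "open V" "0 \<in> V" "\<And>x y. x \<in> V \<Longrightarrow> y \<in> V \<Longrightarrow> x - y \<in> U"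
proof -
  let ?D = "(\<lambda>p::'a \<times> 'a. fst p - snd p) -` U"
  have "open ?D"
    using assms(1,2) by (rule open_vimage[rotated])
  moreover have "(0, 0) \<in> ?D"
    using assms(3) by simp
  ultimately obtain A B where "open A" "open B" "(0, 0) \<in> A \<times> B" "A \<times> B \<subseteq> ?D"
    by (rule open_prod_elim)
  then show thesis
    by (intro that[of "A \<inter> B"]) auto
qed

lemma continuous_diff_prod:
  assumes "continuous_on UNIV (\<lambda>p::'a::{ab_group_add,topological_space} \<times> 'a. fst p - snd p)"
    and "continuous_on UNIV (\<lambda>p::'b::{ab_group_add,topological_space} \<times> 'b. fst p - snd p)"
  shows "continuous_on UNIV (\<lambda>p::('a \<times> 'b) \<times> ('a \<times> 'b). fst p - snd p)"
proof -
  have "continuous_on UNIV ((\<lambda>p. fst p - snd p) \<circ> (\<lambda>p::('a \<times> 'b) \<times> ('a \<times> 'b). (fst (fst p), fst (snd p))))"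
    by (intro continuous_on_compose continuous_on_subset[OF assms(1)] continuous_intros) auto
  moreover have "continuous_on UNIV ((\<lambda>p. fst p - snd p) \<circ> (\<lambda>p::('a \<times> 'b) \<times> ('a \<times> 'b). (snd (fst p), snd (snd p))))"
    by (intro continuous_on_compose continuous_on_subset[OF assms(2)] continuous_intros) auto
  ultimately have "continuous_on UNIV
      (\<lambda>p::('a \<times> 'b) \<times> ('a \<times> 'b). (fst (fst p) - fst (snd p), snd (fst p) - snd (snd p)))"
    unfolding comp_def fst_conv snd_conv by (rule continuous_on_Pair)
  then show ?thesis
    by (rule continuous_on_eq) (simp add: prod_eq_iff)
qed

lemma lca_group_continuous_diff:
  assumes "lca_group TYPE('a::{ab_group_add,t2_space})"
  shows "continuous_on UNIV (\<lambda>p::'a \<times> 'a. fst p - snd p)"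
proof -
  have add: "continuous_on UNIV (\<lambda>p::'a \<times> 'a. fst p + snd p)"
    and neg: "continuous_on UNIV (uminus :: 'a \<Rightarrow> 'a)"
    using assms unfolding lca_group_def by auto
  have "continuous_on UNIV (\<lambda>p::'a \<times> 'a. (fst p, - snd p))"
    by (intro continuous_on_Pair continuous_on_fst continuous_on_snd continuous_on_id
        continuous_on_compose2[OF neg]) auto
  then have "continuous_on UNIV ((\<lambda>p. fst p + snd p) \<circ> (\<lambda>p::'a \<times> 'a. (fst p, - snd p)))"
    by (intro continuous_on_compose continuous_on_subset[OF add]) auto
  then show ?thesis
    by (simp add: comp_def)
qed

lemma uniformly_discrete_translate_card_le:
  fixes L :: "'a::{ab_group_add,topological_space} set"
  assumes cont: "continuous_on UNIV (\<lambda>p::'a \<times> 'a. fst p - snd p)"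
    and diff: "\<And>a b. a \<in> L \<Longrightarrow> b \<in> L \<Longrightarrow> a - b \<in> L"
    and "open U" "0 \<in> U" and isolated: "U \<inter> L = {0}"
    and "compact C"
  obtains m where "\<And>s. finite {x \<in> L. x - s \<in> C} \<and> card {x \<in> L. x - s \<in> C} \<le> m"
proof -
  obtain V where "open V" "0 \<in> V" and V: "\<And>x y. x \<in> V \<Longrightarrow> y \<in> V \<Longrightarrow> x - y \<in> U"
    using continuous_diff_nhds_zero[OF cont \<open>open U\<close> \<open>0 \<in> U\<close>] by blast
  have "open ((\<lambda>x. x - c) -` V)" for c
  proof -
    have "continuous_on UNIV (\<lambda>x::'a. (\<lambda>p. fst p - snd p) (x, c))"
      by (rule continuous_on_compose2[OF cont]) (auto intro!: continuous_intros)
    then show ?thesis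
      using \<open>open V\<close> open_vimage by fastforce
  qed
  moreover have "C \<subseteq> (\<Union>c\<in>C. (\<lambda>x. x - c) -` V)"
    using \<open>0 \<in> V\<close> by auto
  ultimately obtain D where "D \<subseteq> C" "finite D" and D: "C \<subseteq> (\<Union>c\<in>D. (\<lambda>x. x - c) -` V)"
    using compactE_image[OF \<open>compact C\<close>] by metis
  have "finite {x \<in> L. x - s \<in> C} \<and> card {x \<in> L. x - s \<in> C} \<le> card D" for s
  proof -
    define A where "A c = {x \<in> L. x - s - c \<in> V}" for c
    have cover: "{x \<in> L. x - s \<in> C} \<subseteq> (\<Union>c\<in>D. A c)"
      using D by (auto simp: A_def)
    have single: "x = y" if "x \<in> A c" "y \<in> A c" for x y c
    proof -
      have "(x - s - c) - (y - s - c) \<in> U"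
        using V that unfolding A_def by blast
      moreover have "x - y \<in> L"
        using diff that unfolding A_def by blast
      ultimately have "x - y \<in> U \<inter> L"
        by (simp add: algebra_simps)
      then show ?thesis
        using isolated by simp
    qed
    have "finite (A c) \<and> card (A c) \<le> 1" for c
    proof -
      obtain x where "A c \<subseteq> {x}"
        using single by blast
      then show ?thesis
        using card_mono[of "{x}" "A c"] finite_subset by fastforce
    qed
    then have "card (\<Union>c\<in>D. A c) \<le> card D" "finite (\<Union>c\<in>D. A c)"
      using card_UN_le[OF \<open>finite D\<close>, of A] sum_mono[of D "\<lambda>c. card (A c)" "\<lambda>_. 1"] \<open>finite D\<close>
      by auto
    then show ?thesis
      using cover card_mono finite_subset by (metis (no_types, lifting) le_trans)
  qed
  then show thesis
    using that by blast
qed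

lemma cut_and_project_translate_card_le:
  fixes L :: "('g::{ab_group_add,t2_space} \<times> 'h::{ab_group_add,t2_space}) set"
  assumes "continuous_on UNIV (\<lambda>p::'g \<times> 'g. fst p - snd p)"
    and "continuous_on UNIV (\<lambda>p::'h \<times> 'h. fst p - snd p)"
    and "cut_and_project L" and "compact C"
  obtains m where "\<And>s. finite {x \<in> L. x - s \<in> C} \<and> card {x \<in> L. x - s \<in> C} \<le> m"
proof -
  have "0 \<in> L" and add: "\<And>a b. a \<in> L \<Longrightarrow> b \<in> L \<Longrightarrow> a + b \<in> L"
    and neg: "\<And>a. a \<in> L \<Longrightarrow> - a \<in> L"
    and "\<exists>U. open U \<and> 0 \<in> U \<and> U \<inter> L = {0}"
    using \<open>cut_and_project L\<close> unfolding cut_and_project_def by blast+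
  then obtain U where "open U" "0 \<in> U" "U \<inter> L = {0}"
    by blast
  have "a - b \<in> L" if "a \<in> L" "b \<in> L" for a b
    using add[OF that(1) neg[OF that(2)]] by simp
  then show thesis
    using uniformly_discrete_translate_card_le[OF continuous_diff_prod[OF assms(1,2)]]
      \<open>open U\<close> \<open>0 \<in> U\<close> \<open>U \<inter> L = {0}\<close> \<open>compact C\<close> that
    by blast
qed

definition int_weight :: "int \<Rightarrow> real" where
  "int_weight j = 1 / (1 + (of_int j)\<^sup>2)"

lemma int_weight_nonneg: "0 \<le> int_weight j"
  by (simp add: int_weight_def)

lemma int_weight_uminus: "int_weight (- j) = int_weight j"
  by (simp add: int_weight_def)

lemma int_weight_summable: "int_weight summable_on UNIV"
proof -
  have "summable (\<lambda>n::nat. inverse (real n ^ 2))"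
    by (rule inverse_power_summable) simp
  then have "summable (\<lambda>n. int_weight (int n))"
    by (rule summable_comparison_test'[of _ 1])
       (simp add: int_weight_def divide_inverse le_imp_inverse_le)
  then have "(int_weight \<circ> int) summable_on UNIV"
    by (simp add: summable_on_UNIV_nonneg_real_iff int_weight_nonneg comp_def)
  then have nonneg: "int_weight summable_on range int"
    by (simp add: summable_on_reindex)
  then have "(int_weight \<circ> uminus) summable_on range int"
    by (simp add: comp_def int_weight_uminus)
  then have "int_weight summable_on uminus ` range int"
    by (simp add: summable_on_reindex)
  then have "int_weight summable_on (uminus ` range int - range int)"
    by (rule summable_on_subset) auto
  moreover have "x \<in> range int \<union> (uminus ` range int - range int)" for x
  proof (cases "0 \<le> x")
    case True
    then show ?thesis
      by (metis UnI1 nonneg_int_cases rangeI)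
  next
    case False
    then have "x = - int (nat (- x))"
      by simp
    then show ?thesis
      using False by blast
  qed
  then have "UNIV = range int \<union> (uminus ` range int - range int)"
    by blast
  ultimately show ?thesis
    using summable_on_Un_disjoint[OF nonneg] by (metis Diff_disjoint)
qed

lemma sum_prod_le_power:
  fixes T :: "('n::finite \<Rightarrow> 'a) set" and a :: "'a \<Rightarrow> real"
  assumes "finite T" and "\<And>j. 0 \<le> a j" and "\<And>J. finite J \<Longrightarrow> sum a J \<le> A"
  shows "(\<Sum>k\<in>T. \<Prod>i\<in>UNIV. a (k i)) \<le> A ^ CARD('n)"
proof -
  define J where "J = (\<Union>i. (\<lambda>k. k i) ` T)"
  have "finite J"
    using \<open>finite T\<close> by (simp add: J_def)
  have "T \<subseteq> PiE UNIV (\<lambda>_. J)"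
    by (auto simp: J_def PiE_iff)
  then have "(\<Sum>k\<in>T. \<Prod>i\<in>UNIV. a (k i)) \<le> (\<Sum>k\<in>PiE UNIV (\<lambda>_::'n. J). \<Prod>i\<in>UNIV. a (k i))"
    using \<open>finite J\<close> assms(2) by (intro sum_mono2) (auto simp: finite_PiE prod_nonneg)
  also have "\<dots> = (\<Prod>i\<in>(UNIV::'n set). \<Sum>j\<in>J. a j)"
    by (rule prod_sum_PiE[symmetric]) (simp_all add: \<open>finite J\<close>)
  also have "\<dots> \<le> (\<Prod>i\<in>(UNIV::'n set). A)"
    using assms(2,3) \<open>finite J\<close> by (intro prod_mono) (simp add: sum_nonneg)
  finally show ?thesis
    by simp
qed

lemma one_plus_power_le:
  fixes t :: real
  assumes "0 \<le> t"
  shows "(1 + t) ^ n \<le> 2 ^ n * (1 + t ^ n)"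
proof (cases "t \<le> 1")
  case True
  then have "(1 + t) ^ n \<le> 2 ^ n"
    using assms by (intro power_mono) auto
  then show ?thesis
    using assms by (simp add: add_increasing2 order_trans)
next
  case False
  then have "(1 + t) ^ n \<le> (2 * t) ^ n"
    by (intro power_mono) auto
  also have "\<dots> \<le> 2 ^ n * (1 + t ^ n)"
    by (simp add: power_mult_distrib)
  finally show ?thesis .
qed

lemma inverse_one_plus_square_le_int_weight_floor:
  fixes x :: real
  shows "1 / (1 + x\<^sup>2) \<le> 3 * int_weight \<lfloor>x\<rfloor>"
proof -
  let ?k = "real_of_int \<lfloor>x\<rfloor>"
  have "\<bar>?k\<bar> \<le> \<bar>x\<bar> + 1"
    by linarith
  then have "?k\<^sup>2 \<le> (\<bar>x\<bar> + 1)\<^sup>2"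
    by (metis abs_ge_zero abs_le_square_iff abs_of_nonneg add_nonneg_nonneg zero_le_one)
  also have "\<dots> \<le> 2 * x\<^sup>2 + 2"
    using zero_le_power2[of "\<bar>x\<bar> - 1"] by (simp add: power2_eq_square algebra_simps)
  finally have "1 + ?k\<^sup>2 \<le> 3 * (1 + x\<^sup>2)"
    using zero_le_power2[of x] by (smt (verit))
  then show ?thesis
    by (simp add: int_weight_def field_simps add_pos_nonneg)
qed

lemma inverse_polynomial_weight_le_prod_int_weight:
  fixes u :: "real^'n::finite"
  shows "1 / (1 + norm u ^ (2 * CARD('n))) \<le> 6 ^ CARD('n) * (\<Prod>i\<in>UNIV. int_weight \<lfloor>u $ i\<rfloor>)"
proof -
  let ?d = "CARD('n)"
  have "(\<Prod>i\<in>UNIV. 1 + (u $ i)\<^sup>2) \<le> (\<Prod>i\<in>(UNIV::'n set). 1 + (norm u)\<^sup>2)"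
    using component_le_norm_cart[of u]
    by (intro prod_mono) (simp add: abs_le_square_iff[symmetric])
  also have "\<dots> \<le> 2 ^ ?d * (1 + norm u ^ (2 * ?d))"
    using one_plus_power_le[of "(norm u)\<^sup>2" ?d] by (simp add: power_mult)
  finally have "1 / (1 + norm u ^ (2 * ?d)) \<le> 2 ^ ?d / (\<Prod>i\<in>UNIV. 1 + (u $ i)\<^sup>2)"
    by (simp add: field_simps add_pos_nonneg prod_pos)
  also have "\<dots> = 2 ^ ?d * (\<Prod>i\<in>UNIV. 1 / (1 + (u $ i)\<^sup>2))"
    by (simp add: prod_dividef)
  also have "\<dots> \<le> 2 ^ ?d * (\<Prod>i\<in>(UNIV::'n set). 3 * int_weight \<lfloor>u $ i\<rfloor>)"
    by (intro mult_left_mono prod_mono) (simp_all add: inverse_one_plus_square_le_int_weight_floor)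
  also have "\<dots> = 6 ^ ?d * (\<Prod>i\<in>UNIV. int_weight \<lfloor>u $ i\<rfloor>)"
    by (simp add: prod.distrib power_mult_distrib[symmetric])
  finally show ?thesis .
qed

lemma summable_on_le_fibre_card:
  fixes f :: "'a \<Rightarrow> real" and g :: "'b \<Rightarrow> real" and \<kappa> :: "'a \<Rightarrow> 'b"
  assumes f: "\<And>p. p \<in> S \<Longrightarrow> 0 \<le> f p \<and> f p \<le> g (\<kappa> p)"
    and g: "\<And>k. 0 \<le> g k" and sums: "\<And>J. finite J \<Longrightarrow> sum g J \<le> B"
    and fibres: "\<And>k. finite {p \<in> S. \<kappa> p = k} \<and> card {p \<in> S. \<kappa> p = k} \<le> m"
  shows "f summable_on S \<and> infsum f S \<le> m * B"
proof -
  have finite_sums: "sum f F \<le> m * B" if "finite F" "F \<subseteq> S" for F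
  proof -
    have "sum f F \<le> sum (g \<circ> \<kappa>) F"
      using f that by (intro sum_mono) auto
    also have "\<dots> = (\<Sum>k\<in>\<kappa> ` F. card {p \<in> F. \<kappa> p = k} * g k)"
      using sum.image_gen[OF \<open>finite F\<close>, of "g \<circ> \<kappa>" \<kappa>] by simp
    also have "\<dots> \<le> (\<Sum>k\<in>\<kappa> ` F. m * g k)"
    proof (intro sum_mono mult_right_mono g)
      fix k
      have "card {p \<in> F. \<kappa> p = k} \<le> card {p \<in> S. \<kappa> p = k}"
        using fibres \<open>F \<subseteq> S\<close> by (intro card_mono) auto
      then show "real (card {p \<in> F. \<kappa> p = k}) \<le> real m"
        using fibres[of k] by linarith
    qed
    also have "\<dots> \<le> m * B"
      using sums[of "\<kappa> ` F"] \<open>finite F\<close> by (simp add: sum_distrib_left[symmetric] mult_left_mono)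
    finally show ?thesis .
  qed
  then have "f summable_on S"
    using f by (intro nonneg_bdd_above_summable_on bdd_aboveI2[where M = "m * B"]) auto
  then show ?thesis
    using infsum_le_finite_sums finite_sums by blast
qed

lemma schwartz_polynomial_weight_bdd_above:
  assumes "schwartz \<phi>"
  shows "bdd_above (range (\<lambda>x. (1 + norm x ^ N) * norm (\<phi> x)))"
proof -
  have "bounded (range (\<lambda>x. (1 + norm x) ^ N * norm (pdiffs [] \<phi> x)))"
    using assms unfolding schwartz_def by blast
  then obtain B where B: "\<And>x. (1 + norm x) ^ N * norm (\<phi> x) \<le> B"
    by (auto simp: bounded_iff)
  have "(1 + norm x ^ N) * norm (\<phi> x) \<le> 2 * B" for x
  proof -
    have "1 \<le> (1 + norm x) ^ N" "norm x ^ N \<le> (1 + norm x) ^ N"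
      by (simp_all add: one_le_power power_mono)
    then have "1 + norm x ^ N \<le> 2 * (1 + norm x) ^ N"
      by linarith
    then have "(1 + norm x ^ N) * norm (\<phi> x) \<le> 2 * ((1 + norm x) ^ N * norm (\<phi> x))"
      by (metis mult.assoc mult_right_mono norm_ge_zero)
    then show ?thesis
      using B[of x] by linarith
  qed
  then show ?thesis
    by (rule bdd_aboveI2)
qed

lemma Cc_norm_bdd_above:
  assumes "Cc \<psi>"
  shows "bdd_above (range (\<lambda>y. norm (\<psi> y)))"
proof -
  have "compact (\<psi> ` supp \<psi>)"
    using assms unfolding Cc_def supp_def
    by (auto intro: compact_continuous_image continuous_on_subset)
  then obtain B where B: "\<And>z. z \<in> \<psi> ` supp \<psi> \<Longrightarrow> norm z \<le> B"
    by (meson bounded_iff compact_imp_bounded)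
  have "norm (\<psi> y) \<le> max B 0" for y
    using B[of "\<psi> y"] closure_subset[of "{y. \<psi> y \<noteq> 0}"] unfolding supp_def
    by (cases "\<psi> y = 0") auto
  then show ?thesis
    by (rule bdd_aboveI2)
qed

lemma supp_subset_imp_vanishes:
  "supp \<psi> \<subseteq> W \<Longrightarrow> y \<notin> W \<Longrightarrow> \<psi> y = 0"
  using closure_subset[of "{y. \<psi> y \<noteq> 0}"] unfolding supp_def by blast

lemma norm_le_prod_int_weight:
  fixes \<phi> :: "real^'n::finite \<Rightarrow> 'a::real_normed_vector"
  assumes "\<And>x. (1 + norm x ^ (2 * CARD('n))) * norm (\<phi> x) \<le> M"
  shows "norm (\<phi> u) \<le> 6 ^ CARD('n) * M * (\<Prod>i\<in>UNIV. int_weight \<lfloor>u $ i\<rfloor>)"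
proof -
  let ?w = "1 + norm u ^ (2 * CARD('n))"
  have "0 < ?w"
    by (simp add: add_pos_nonneg)
  have "0 \<le> M"
    using order_trans[OF _ assms[of u]] by simp
  have "norm (\<phi> u) = ?w * norm (\<phi> u) * (1 / ?w)"
    using \<open>0 < ?w\<close> by simp
  also have "\<dots> \<le> M * (6 ^ CARD('n) * (\<Prod>i\<in>UNIV. int_weight \<lfloor>u $ i\<rfloor>))"
    using assms \<open>0 < ?w\<close> \<open>0 \<le> M\<close> inverse_polynomial_weight_le_prod_int_weight[of u]
    by (intro mult_mono) auto
  finally show ?thesis
    by (simp add: ac_simps)
qed

lemma cut_and_project_weighted_sum_le:
  fixes L :: "('g::{ab_group_add,t2_space} \<times> (real^'n::finite) \<times> 'h::{ab_group_add,t2_space}) set"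
  assumes "lca_group TYPE('g)" and "lca_group TYPE('h)" and "cut_and_project L"
    and "compact K" and "compact W"
  obtains C where
    "\<And>(\<phi> :: real^'n \<Rightarrow> 'a::real_normed_div_algebra) \<psi> t M S. (\<And>x. (1 + norm x ^ (2 * CARD('n))) * norm (\<phi> x) \<le> M) \<Longrightarrow>
       (\<And>y. norm (\<psi> y) \<le> S) \<Longrightarrow> (\<And>y. y \<notin> W \<Longrightarrow> \<psi> y = 0) \<Longrightarrow>
       (\<lambda>p. norm (\<phi> (fst (snd p)) * \<psi> (snd (snd p)))) summable_on {p \<in> L. fst p \<in> (+) t ` K} \<and>
       infsum (\<lambda>p. norm (\<phi> (fst (snd p)) * \<psi> (snd (snd p)))) {p \<in> L. fst p \<in> (+) t ` K}
         \<le> C * S * M"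
proof -
  let ?d = "CARD('n)"
  define cell where "cell = K \<times> cbox (0::real^'n) (\<chi> i. 1) \<times> W"
  have diff_cont: "continuous_on UNIV (\<lambda>p::((real^'n) \<times> 'h) \<times> ((real^'n) \<times> 'h). fst p - snd p)"
    by (intro continuous_diff_prod lca_group_continuous_diff assms(2) continuous_intros)
  have "compact cell"
    unfolding cell_def using assms(4,5) by (intro compact_Times compact_cbox)
  obtain m where m: "\<And>s. finite {x \<in> L. x - s \<in> cell} \<and> card {x \<in> L. x - s \<in> cell} \<le> m"
    using cut_and_project_translate_card_le[OF lca_group_continuous_diff[OF assms(1)] diff_cont
        assms(3) \<open>compact cell\<close>] by blast
  define A where "A = infsum int_weight UNIV"
  have A: "sum int_weight J \<le> A" if "finite J" for J
    unfolding A_def using that by (intro finite_sum_le_infsum int_weight_summable int_weight_nonneg) auto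
  have "(\<lambda>p. norm (\<phi> (fst (snd p)) * \<psi> (snd (snd p)))) summable_on {p \<in> L. fst p \<in> (+) t ` K} \<and>
       infsum (\<lambda>p. norm (\<phi> (fst (snd p)) * \<psi> (snd (snd p)))) {p \<in> L. fst p \<in> (+) t ` K}
         \<le> (m * 6 ^ ?d * A ^ ?d) * S * M"
    if M: "\<And>x. (1 + norm x ^ (2 * ?d)) * norm (\<phi> x) \<le> M" and S: "\<And>y. norm (\<psi> y) \<le> S"
      and W: "\<And>y. y \<notin> W \<Longrightarrow> \<psi> y = 0" for \<phi> :: "real^'n \<Rightarrow> 'a" and \<psi> t M S
  proof -
    define f where "f p = norm (\<phi> (fst (snd p)) * \<psi> (snd (snd p)))" for p :: "'g \<times> (real^'n) \<times> 'h"
    define \<kappa> where "\<kappa> p = (\<lambda>i. \<lfloor>fst (snd p) $ i\<rfloor>)" for p :: "'g \<times> (real^'n) \<times> 'h"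
    define g where "g k = 6 ^ ?d * M * S * (\<Prod>i\<in>UNIV. int_weight (k i))" for k :: "'n \<Rightarrow> int"
    define Q where "Q = {p \<in> L. fst p \<in> (+) t ` K}"
    define P where "P = {p \<in> Q. snd (snd p) \<in> W}"
    have "0 \<le> M" "0 \<le> S"
      using order_trans[OF _ M[of 0]] order_trans[OF _ S[of 0]] by simp_all
    then have g_nonneg: "0 \<le> g k" for k
      by (simp add: g_def prod_nonneg int_weight_nonneg)
    have "f p \<le> g (\<kappa> p)" for p
    proof -
      have "norm (\<phi> (fst (snd p))) * norm (\<psi> (snd (snd p)))
          \<le> (6 ^ ?d * M * (\<Prod>i\<in>UNIV. int_weight (\<kappa> p i))) * S"
        unfolding \<kappa>_def using \<open>0 \<le> M\<close>
        by (intro mult_mono norm_le_prod_int_weight[OF M] S)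
          (simp_all add: prod_nonneg int_weight_nonneg)
      then show ?thesis
        by (simp add: f_def g_def norm_mult mult_ac)
    qed
    moreover have "sum g J \<le> 6 ^ ?d * M * S * A ^ ?d" if "finite J" for J
    proof -
      have "sum g J = 6 ^ ?d * M * S * (\<Sum>k\<in>J. \<Prod>i\<in>UNIV. int_weight (k i))"
        by (simp add: g_def sum_distrib_left)
      also have "\<dots> \<le> 6 ^ ?d * M * S * A ^ ?d"
        using sum_prod_le_power[OF that int_weight_nonneg A] \<open>0 \<le> M\<close> \<open>0 \<le> S\<close>
        by (intro mult_left_mono) simp_all
      finally show ?thesis .
    qed
    moreover have "finite {p \<in> P. \<kappa> p = k} \<and> card {p \<in> P. \<kappa> p = k} \<le> m" for k
    proof -
      define s where "s = (t, (\<chi> i. of_int (k i)) :: real^'n, 0 :: 'h)"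
      have fibre_sub: "{p \<in> P. \<kappa> p = k} \<subseteq> {x \<in> L. x - s \<in> cell}"
      proof
        fix p assume "p \<in> {p \<in> P. \<kappa> p = k}"
        then have "p \<in> P" "\<kappa> p = k"
          by simp_all
        then have "k i = \<lfloor>fst (snd p) $ i\<rfloor>" for i
          unfolding \<kappa>_def by auto
        then have "fst (snd p) - (\<chi> i. of_int (k i)) \<in> cbox 0 (\<chi> i. 1)"
          unfolding mem_box_cart by simp linarith
        moreover have "fst p - t \<in> K" "snd (snd p) \<in> W" "p \<in> L"
          using \<open>p \<in> P\<close> by (auto simp: P_def Q_def)
        moreover have "p - s = (fst p - t, fst (snd p) - (\<chi> i. of_int (k i)), snd (snd p))"
          by (simp add: s_def prod_eq_iff)
        ultimately show "p \<in> {x \<in> L. x - s \<in> cell}"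
          by (simp add: cell_def)
      qed
      then show ?thesis
        using m[of s] finite_subset[OF fibre_sub] card_mono[OF _ fibre_sub] le_trans by blast
    qed
    ultimately have "f summable_on P \<and> infsum f P \<le> m * (6 ^ ?d * M * S * A ^ ?d)"
      using g_nonneg by (intro summable_on_le_fibre_card[where g = g and \<kappa> = \<kappa>]) (simp_all add: f_def)
    moreover have "f summable_on Q \<longleftrightarrow> f summable_on P" "infsum f Q = infsum f P"
      using W by (intro summable_on_cong_neutral infsum_cong_neutral; force simp: f_def P_def)+
    ultimately show ?thesis
      unfolding Q_def f_def[abs_def] by (simp add: mult_ac)
  qed
  then show thesis
    by (rule that)
qed

lemma cut_and_project_omega_var_le:
  fixes L :: "('g::{ab_group_add,t2_space} \<times> (real^'n::finite) \<times> 'h::{ab_group_add,t2_space}) set"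
  assumes "lca_group TYPE('g)" and "lca_group TYPE('h)" and "cut_and_project L"
    and "compact K" and "compact W"
  shows "\<exists>C. \<forall>\<phi> \<psi> t. schwartz \<phi> \<and> Cc \<psi> \<and> supp \<psi> \<subseteq> W \<longrightarrow>
    (\<lambda>p. norm (\<phi> (fst (snd p)) * \<psi> (snd (snd p)))) summable_on {p \<in> L. fst p \<in> (+) t ` K} \<and>
    omega_var L \<phi> \<psi> ((+) t ` K)
      \<le> C * (SUP y. norm (\<psi> y)) * (SUP x. (1 + norm x ^ (2 * CARD('n))) * norm (\<phi> x))"
proof -
  obtain C where C: "\<And>(\<phi> :: real^'n \<Rightarrow> complex) \<psi> t M S.
      (\<And>x. (1 + norm x ^ (2 * CARD('n))) * norm (\<phi> x) \<le> M) \<Longrightarrow>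
      (\<And>y. norm (\<psi> y) \<le> S) \<Longrightarrow> (\<And>y. y \<notin> W \<Longrightarrow> \<psi> y = 0) \<Longrightarrow>
      (\<lambda>p. norm (\<phi> (fst (snd p)) * \<psi> (snd (snd p)))) summable_on {p \<in> L. fst p \<in> (+) t ` K} \<and>
      infsum (\<lambda>p. norm (\<phi> (fst (snd p)) * \<psi> (snd (snd p)))) {p \<in> L. fst p \<in> (+) t ` K}
        \<le> C * S * M"
    using cut_and_project_weighted_sum_le[where 'a = complex, OF assms] by blast
  show ?thesis
    unfolding omega_var_def
    by (intro exI[of _ C] allI impI C)
      (auto intro!: cSUP_upper schwartz_polynomial_weight_bdd_above Cc_norm_bdd_above
        intro: supp_subset_imp_vanishes)
qed

theorem lemma5p2:
  fixes \<L> :: "('g::{ab_group_add, t2_space} \<times> (real^'n::finite) \<times> ('h::{ab_group_add, t2_space})) set"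
  assumes "lca_group TYPE('g)" and "lca_group TYPE('h)"
    and "cut_and_project \<L>"
  shows "(\<forall>\<phi> \<psi> K. schwartz \<phi> \<and> Cc \<psi> \<and> compact K \<longrightarrow>
            (\<lambda>p. norm (\<phi> (fst (snd p)) * \<psi> (snd (snd p)))) summable_on {p\<in>\<L>. fst p \<in> K})
       \<and> (\<forall>K W. compact K \<and> compact W \<longrightarrow>
            (\<exists>C. \<forall>\<phi> \<psi>. schwartz \<phi> \<and> Cc \<psi> \<and> supp \<psi> \<subseteq> W \<longrightarrow>
               (\<forall>t. omega_var \<L> \<phi> \<psi> ((+) t ` K)
                 \<le> C * (SUP y. norm (\<psi> y))
                     * (SUP x. (1 + norm x ^ (2 * CARD('n))) * norm (\<phi> x)))))"
proof (intro conjI allI impI)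
  fix \<phi> :: "real^'n \<Rightarrow> complex" and \<psi> :: "'h \<Rightarrow> complex" and K :: "'g set"
  assume hyps: "schwartz \<phi> \<and> Cc \<psi> \<and> compact K"
  then have "compact (supp \<psi>)"
    unfolding Cc_def supp_def by blast
  then have "(\<lambda>p. norm (\<phi> (fst (snd p)) * \<psi> (snd (snd p)))) summable_on {p \<in> \<L>. fst p \<in> (+) 0 ` K}"
    using cut_and_project_omega_var_le[OF assms, of K "supp \<psi>"] hyps by blast
  then show "(\<lambda>p. norm (\<phi> (fst (snd p)) * \<psi> (snd (snd p)))) summable_on {p \<in> \<L>. fst p \<in> K}"
    by simp
next
  fix K :: "'g set" and W :: "'h set"
  assume "compact K \<and> compact W"
  then show "\<exists>C. \<forall>\<phi> \<psi>. schwartz \<phi> \<and> Cc \<psi> \<and> supp \<psi> \<subseteq> W \<longrightarrow>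
      (\<forall>t. omega_var \<L> \<phi> \<psi> ((+) t ` K)
        \<le> C * (SUP y. norm (\<psi> y)) * (SUP x. (1 + norm x ^ (2 * CARD('n))) * norm (\<phi> x)))"
    using cut_and_project_omega_var_le[OF assms, of K W] by blast
qed

end
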